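(* For every integer $d\geq 2$ and every integer $n\geq d^{12d\log d}$, $$1<\frac{\log p_d(n)}{n^{1-\frac{1}{d}}}<d^2.$$
   Context: $\mathbb{Z}_+=\{0,1,2,\dots\}$. A set $S\subset\mathbb{Z}_+^d$ is a lower set if whenever $\mathbf{x}\in S$ and $\mathbf{x}'\in\mathbb{Z}_+^d$ satisfies $x'_i\leq x_i$ for all $i$, then $\mathbf{x}'\in S$. $p_d(n)$ denotes the number of lower sets in $\mathbb{Z}_+^d$ with exactly $n$ points. $\log$ is the natural logarithm. *)

theory Defs
  imports "HOL-Analysis.Analysis"
begin

text \<open>Points of Z_+^d are represented as functions nat => nat vanishing at all
  coordinates i >= d (coordinates 0..d-1 are the genuine ones).\<close>

definition lattice_pts :: "nat \<Rightarrow> (nat \<Rightarrow> nat) set" where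
  "lattice_pts d = {x. \<forall>i\<ge>d. x i = 0}"

definition lower_set :: "nat \<Rightarrow> (nat \<Rightarrow> nat) set \<Rightarrow> bool" where
  "lower_set d S \<longleftrightarrow> S \<subseteq> lattice_pts d \<and>
     (\<forall>x\<in>S. \<forall>x'\<in>lattice_pts d. (\<forall>i<d. x' i \<le> x i) \<longrightarrow> x' \<in> S)"

definition p :: "nat \<Rightarrow> nat \<Rightarrow> nat" where
  "p d n = card {S. lower_set d S \<and> finite S \<and> card S = n}"

end

theory Submission
  imports Defs
begin

(*
  Upper bound: slice a lower set S of size n in d = k + 1 dimensions into columns along the
  last coordinate. The column heights h y (y in k dimensions) decrease in every coordinate, and
  S is determined by the drops h y - max_i h (y + e_i), whose weighted sum with weights
  k + |y| is at most k n. Rankin's trick bounds the number of such weight-bounded functions by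
  exp (tau n + (k / tau)^k pi^2 / 6); with tau = k n^(-1/d) this gives
  ln p_d(n) <= (k + pi^2 / 6) n^(1 - 1/d) < d^2 n^(1 - 1/d).

  Lower bound: over the points y with |y| < m, columns of height 2 (m - |y|) - e y with
  e y in {0, 1, 2} always form a lower set, giving 3^C(m - 1 + k, k) lower sets of size at most
  2 C(m - 1 + d, d). For the largest m with 2 C(m - 1 + d, d) <= n this yields
  ln p_d(n) >= ln 3 m^k / k! - ln (n + 1), and n >= d^(12 d ln d) makes m large enough for this
  to exceed n^(1 - 1/d).
*)

lemma lower_setD:
  "lower_set d S \<Longrightarrow> x \<in> S \<Longrightarrow> x' \<in> lattice_pts d \<Longrightarrow> (\<And>i. i < d \<Longrightarrow> x' i \<le> x i) \<Longrightarrow> x' \<in> S"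
  unfolding lower_set_def by blast

lemma lower_set_subset_lattice_pts: "lower_set d S \<Longrightarrow> S \<subseteq> lattice_pts d"
  unfolding lower_set_def by blast

lemma lower_set_coord_less_card:
  assumes L: "lower_set d S" and F: "finite S" and x: "x \<in> S" and i: "i < d"
  shows "x i < card S"
proof -
  have xl: "x \<in> lattice_pts d" using lower_set_subset_lattice_pts[OF L] x ..
  have sub: "(\<lambda>t. x(i:=t)) ` {0..x i} \<subseteq> S"
  proof
    fix z assume "z \<in> (\<lambda>t. x(i:=t)) ` {0..x i}"
    then obtain t where t: "t \<le> x i" "z = x(i:=t)" by auto
    have "z \<in> lattice_pts d" using xl i t unfolding lattice_pts_def by auto
    then show "z \<in> S" using lower_setD[OF L x] t by auto
  qed
  have "inj_on (\<lambda>t. x(i:=t)) {0..x i}"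
    by (rule inj_onI) (metis fun_upd_same)
  then show ?thesis using card_mono[OF F sub] by (simp add: card_image)
qed

definition grid :: "nat \<Rightarrow> nat \<Rightarrow> (nat \<Rightarrow> nat) set" where
  "grid d N = {x \<in> lattice_pts d. \<forall>i<d. x i < N}"

lemma finite_grid: "finite (grid d N)"
proof -
  have "grid d N \<subseteq> {x. (\<forall>i. (i \<in> {..<d} \<longrightarrow> x i \<in> {..<N}) \<and> (i \<notin> {..<d} \<longrightarrow> x i = 0))}"
    unfolding grid_def lattice_pts_def by auto
  moreover have "finite {x. (\<forall>i. (i \<in> {..<d} \<longrightarrow> x i \<in> {..<N}) \<and> (i \<notin> {..<d} \<longrightarrow> (x i :: nat) = 0))}"
    by (rule finite_set_of_finite_funs) auto
  ultimately show ?thesis by (rule finite_subset)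
qed

lemma lower_set_subset_grid:
  assumes "lower_set d S" "finite S" "card S \<le> N"
  shows "S \<subseteq> grid d N"
  using lower_set_subset_lattice_pts[OF assms(1)] lower_set_coord_less_card[OF assms(1,2)] assms(3)
  unfolding grid_def by (auto intro: less_le_trans)

lemma finite_lower_sets: "finite {S. lower_set d S \<and> finite S \<and> card S = n}"
proof (rule finite_subset[of _ "Pow (grid d n)"])
  show "{S. lower_set d S \<and> finite S \<and> card S = n} \<subseteq> Pow (grid d n)"
    using lower_set_subset_grid by fastforce
qed (simp add: finite_grid)

lemma down_closed_nat_eq_lessThan:
  fixes A :: "nat set"
  assumes "finite A" "\<And>a b. a \<in> A \<Longrightarrow> b \<le> a \<Longrightarrow> b \<in> A"
  shows "A = {..<card A}"
proof (cases "A = {}")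
  case False
  have "A = {..Max A}"
    using assms Max_in[OF assms(1) False] by (auto intro: Max_ge)
  then show ?thesis by (metis card_atMost lessThan_Suc_atMost)
qed simp

text \<open>Adding the next point of the first axis maps lower sets of size \<open>n\<close> injectively to lower
  sets of size \<open>n + 1\<close>, so \<open>p d\<close> is monotone.\<close>

definition axis_pt :: "nat \<Rightarrow> nat \<Rightarrow> nat" where
  "axis_pt a = (\<lambda>i. if i = 0 then a else 0)"

definition axis_len :: "(nat \<Rightarrow> nat) set \<Rightarrow> nat" where
  "axis_len S = card {a. axis_pt a \<in> S}"

definition extend_axis :: "(nat \<Rightarrow> nat) set \<Rightarrow> (nat \<Rightarrow> nat) set" where
  "extend_axis S = insert (axis_pt (axis_len S)) S"

lemma axis_pt_inject [simp]: "axis_pt a = axis_pt b \<longleftrightarrow> a = b"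
  by (auto simp: axis_pt_def dest: fun_cong[where x = 0])

lemma axis_pt_in_lattice_pts: "d \<ge> 1 \<Longrightarrow> axis_pt a \<in> lattice_pts d"
  unfolding lattice_pts_def axis_pt_def by auto

lemma below_axis_pt:
  assumes "d \<ge> 1" "x \<in> lattice_pts d" "\<forall>i<d. x i \<le> axis_pt a i"
  shows "x = axis_pt (x 0)" "x 0 \<le> a"
proof -
  show "x = axis_pt (x 0)"
  proof
    fix i show "x i = axis_pt (x 0) i"
      using assms spec[OF assms(3), of i] unfolding lattice_pts_def axis_pt_def
      by (cases "i < d") auto
  qed
  show "x 0 \<le> a" using assms(1,3) unfolding axis_pt_def by auto
qed

lemma axis_pts_eq_lessThan:
  assumes L: "lower_set d S" and F: "finite S" and d: "d \<ge> 1"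
  shows "{a. axis_pt a \<in> S} = {..<axis_len S}"
  unfolding axis_len_def
proof (rule down_closed_nat_eq_lessThan)
  show "finite {a. axis_pt a \<in> S}"
    using finite_vimageI[OF F, of axis_pt] unfolding inj_on_def vimage_def by simp
  fix a b assume a: "a \<in> {a. axis_pt a \<in> S}" and "b \<le> a"
  then have "\<And>i. axis_pt b i \<le> axis_pt a i" by (simp add: axis_pt_def)
  with a show "b \<in> {a. axis_pt a \<in> S}"
    using lower_setD[OF L _ axis_pt_in_lattice_pts[OF d]] by blast
qed

lemma
  assumes L: "lower_set d S" and F: "finite S" and d: "d \<ge> 1"
  shows lower_set_extend_axis: "lower_set d (extend_axis S)"
    and finite_extend_axis: "finite (extend_axis S)"
    and card_extend_axis: "card (extend_axis S) = Suc (card S)"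
    and axis_len_extend_axis: "axis_len (extend_axis S) = Suc (axis_len S)"
proof -
  let ?a = "axis_len S"
  have A: "{a. axis_pt a \<in> S} = {..<?a}" by (rule axis_pts_eq_lessThan[OF assms])
  then have notin: "axis_pt ?a \<notin> S" by auto
  show "finite (extend_axis S)" using F unfolding extend_axis_def by simp
  show "card (extend_axis S) = Suc (card S)" using F notin unfolding extend_axis_def by simp
  have "{a. axis_pt a \<in> extend_axis S} = insert ?a {..<?a}"
    unfolding extend_axis_def using A by auto
  then show "axis_len (extend_axis S) = Suc ?a" unfolding axis_len_def by simp
  show "lower_set d (extend_axis S)"
    unfolding lower_set_def
  proof (intro conjI ballI impI)
    show "extend_axis S \<subseteq> lattice_pts d"
      using lower_set_subset_lattice_pts[OF L] axis_pt_in_lattice_pts[OF d]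
      unfolding extend_axis_def by auto
    fix x x' assume x: "x \<in> extend_axis S" and x': "x' \<in> lattice_pts d" and le: "\<forall>i<d. x' i \<le> x i"
    show "x' \<in> extend_axis S"
    proof (cases "x \<in> S")
      case True then show ?thesis
        using lower_setD[OF L True x'] le unfolding extend_axis_def by auto
    next
      case False
      then have "x = axis_pt ?a" using x unfolding extend_axis_def by auto
      then have "x' = axis_pt (x' 0)" "x' 0 \<le> ?a" using below_axis_pt[OF d x'] le by auto
      moreover have "x' 0 < ?a \<Longrightarrow> axis_pt (x' 0) \<in> S" using A by blast
      ultimately show ?thesis unfolding extend_axis_def by (metis insertCI le_neq_implies_less)
    qed
  qed
qed

lemma inj_on_extend_axis:
  assumes "d \<ge> 1"
  shows "inj_on extend_axis {S. lower_set d S \<and> finite S}"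
proof (rule inj_onI)
  fix S T assume S: "S \<in> {S. lower_set d S \<and> finite S}" and T: "T \<in> {S. lower_set d S \<and> finite S}"
    and eq: "extend_axis S = extend_axis T"
  have "axis_len S = axis_len T"
    using axis_len_extend_axis[OF _ _ assms] S T eq by (metis mem_Collect_eq Suc_inject)
  moreover have "axis_pt (axis_len S) \<notin> S" "axis_pt (axis_len T) \<notin> T"
    using axis_pts_eq_lessThan[OF _ _ assms] S T by auto
  ultimately show "S = T" using eq unfolding extend_axis_def by (metis insert_ident)
qed

lemma p_mono:
  assumes "d \<ge> 1" "a \<le> b" shows "p d a \<le> p d b"
  using assms(2)
proof (induction b)
  case (Suc b)
  have "p d b \<le> p d (Suc b)"
    unfolding p_def
  proof (rule card_inj_on_le[OF _ _ finite_lower_sets])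
    show "inj_on extend_axis {S. lower_set d S \<and> finite S \<and> card S = b}"
      using inj_on_extend_axis[OF assms(1)] by (rule inj_on_subset) auto
    show "extend_axis ` {S. lower_set d S \<and> finite S \<and> card S = b}
        \<subseteq> {S. lower_set d S \<and> finite S \<and> card S = Suc b}"
      using lower_set_extend_axis finite_extend_axis card_extend_axis assms(1) by auto
  qed
  then show ?case using Suc by (cases "a = Suc b") auto
qed simp

lemma card_family_of_lower_sets_le:
  assumes d: "d \<ge> 1" and F: "\<And>T. T \<in> F \<Longrightarrow> lower_set d T \<and> finite T \<and> card T \<le> n"
  shows "card F \<le> (n + 1) * p d n"
proof -
  have "F \<subseteq> (\<Union>j\<le>n. {S. lower_set d S \<and> finite S \<and> card S = j})" using F by auto
  then have "card F \<le> card (\<Union>j\<le>n. {S. lower_set d S \<and> finite S \<and> card S = j})"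
    by (rule card_mono[rotated]) (auto intro: finite_lower_sets)
  also have "\<dots> \<le> (\<Sum>j\<le>n. p d j)"
    unfolding p_def by (rule card_UN_le) simp
  also have "\<dots> \<le> (\<Sum>j\<le>n. p d n)"
    by (rule sum_mono) (simp add: p_mono[OF d])
  finally show ?thesis by simp
qed

section \<open>Encoding lower sets by column heights\<close>

definition column_pts :: "(nat \<Rightarrow> nat) set \<Rightarrow> nat \<Rightarrow> (nat \<Rightarrow> nat) \<Rightarrow> nat set" where
  "column_pts S k y = {t. y(k := t) \<in> S}"

definition height :: "(nat \<Rightarrow> nat) set \<Rightarrow> nat \<Rightarrow> (nat \<Rightarrow> nat) \<Rightarrow> nat" where
  "height S k y = card (column_pts S k y)"

definition incr :: "nat \<Rightarrow> (nat \<Rightarrow> nat) \<Rightarrow> (nat \<Rightarrow> nat)" where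
  "incr i y = y(i := Suc (y i))"

definition height_drop :: "(nat \<Rightarrow> nat) set \<Rightarrow> nat \<Rightarrow> (nat \<Rightarrow> nat) \<Rightarrow> nat" where
  "height_drop S k y = height S k y - Max ((\<lambda>i. height S k (incr i y)) ` {..<k})"

lemma incr_in_lattice_pts: "i < k \<Longrightarrow> y \<in> lattice_pts k \<Longrightarrow> incr i y \<in> lattice_pts k"
  unfolding incr_def lattice_pts_def by auto

lemma inj_incr: "inj (incr i)"
proof (rule injI)
  fix a b assume e: "incr i a = incr i b"
  show "a = b"
  proof
    fix j show "a j = b j" using fun_cong[OF e, of j] by (cases "j = i") (auto simp: incr_def)
  qed
qed

lemma sum_incr: "i < k \<Longrightarrow> (\<Sum>j<k. incr i y j) = Suc (\<Sum>j<k. y j)"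
  unfolding incr_def by (simp add: sum.remove[of "{..<k}" i])

lemma sum_fun_upd_eq: "(\<Sum>i<k. (x(k := v)) i) = (\<Sum>i<k. x i :: nat)" for k :: nat
  by (rule sum.cong) auto

lemma fun_upd_last_in_lattice_pts:
  "x \<in> lattice_pts (Suc k) \<Longrightarrow> x(k := 0) \<in> lattice_pts k"
  "y \<in> lattice_pts k \<Longrightarrow> y(k := t) \<in> lattice_pts (Suc k)"
  unfolding lattice_pts_def by auto

lemma finite_column_pts:
  assumes "finite S" shows "finite (column_pts S k y)"
proof -
  have "inj (\<lambda>t. y(k := t))" by (rule injI) (metis fun_upd_same)
  then show ?thesis unfolding column_pts_def using finite_vimageI[OF assms] unfolding vimage_def by blast
qed

lemma height_le_card:
  assumes "finite S" shows "height S k y \<le> card S"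
proof -
  have "inj_on (\<lambda>t. y(k := t)) (column_pts S k y)" by (rule inj_onI) (metis fun_upd_same)
  moreover have "(\<lambda>t. y(k := t)) ` column_pts S k y \<subseteq> S" unfolding column_pts_def by auto
  ultimately show ?thesis unfolding height_def using card_inj_on_le[OF _ _ assms] by blast
qed

lemma height_drop_le: "i < k \<Longrightarrow> height_drop S k y \<le> height S k y - height S k (incr i y)"
  unfolding height_drop_def by (rule diff_le_mono2) (rule Max_ge, auto)

context
  fixes S :: "(nat \<Rightarrow> nat) set" and k :: nat
  assumes L: "lower_set (Suc k) S" and F: "finite S"
begin

lemma column_pts_eq_lessThan: "column_pts S k y = {..<height S k y}"
  unfolding height_def
proof (rule down_closed_nat_eq_lessThan[OF finite_column_pts[OF F]])
  fix a b assume "a \<in> column_pts S k y" and b: "b \<le> a"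
  then have ya: "y(k := a) \<in> S" unfolding column_pts_def by simp
  then have "y(k := b) \<in> lattice_pts (Suc k)"
    using lower_set_subset_lattice_pts[OF L] unfolding lattice_pts_def by auto
  then show "b \<in> column_pts S k y"
    using lower_setD[OF L ya] b unfolding column_pts_def by auto
qed

lemma mem_iff_less_height: "x \<in> S \<longleftrightarrow> x \<in> lattice_pts (Suc k) \<and> x k < height S k (x(k := 0))"
proof -
  have "x \<in> S \<longleftrightarrow> x k \<in> column_pts S k (x(k := 0))" unfolding column_pts_def by simp
  then show ?thesis using column_pts_eq_lessThan lower_set_subset_lattice_pts[OF L] by auto
qed

lemma height_incr_le: assumes "i < k" shows "height S k (incr i y) \<le> height S k y"
proof -
  have "column_pts S k (incr i y) \<subseteq> column_pts S k y"
  proof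
    fix t assume "t \<in> column_pts S k (incr i y)"
    then have u: "(incr i y)(k := t) \<in> S" unfolding column_pts_def by simp
    then have "y(k := t) \<in> lattice_pts (Suc k)"
      using lower_set_subset_lattice_pts[OF L] assms unfolding lattice_pts_def incr_def by auto
    then show "t \<in> column_pts S k y"
      using lower_setD[OF L u] assms unfolding column_pts_def incr_def by auto
  qed
  then show ?thesis unfolding height_def by (rule card_mono[OF finite_column_pts[OF F]])
qed

lemma height_pos_imp_grid:
  assumes y: "y \<in> lattice_pts k" and pos: "height S k y > 0"
  shows "y \<in> grid k (card S)"
proof -
  have "y(k := 0) \<in> S" using column_pts_eq_lessThan pos unfolding column_pts_def by auto
  then have "\<And>i. i < k \<Longrightarrow> y i < card S"
    using lower_set_coord_less_card[OF L F] by (metis fun_upd_other less_Suc_eq less_irrefl)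
  then show ?thesis using y unfolding grid_def by auto
qed

lemma Max_height_incr_le: "k \<ge> 1 \<Longrightarrow> Max ((\<lambda>i. height S k (incr i y)) ` {..<k}) \<le> height S k y"
  using height_incr_le by (subst Max_le_iff) (auto simp: lessThan_empty_iff)

lemma card_eq_sum_height: "card S = (\<Sum>y\<in>grid k (card S). height S k y)"
proof -
  let ?G = "grid k (card S)"
  have "bij_betw (\<lambda>x. (x(k := 0), x k)) S (Sigma ?G (\<lambda>y. {..<height S k y}))"
  proof (rule bij_betwI[where g = "\<lambda>(y, t). y(k := t)"])
    show "(\<lambda>x. (x(k := 0), x k)) \<in> S \<rightarrow> Sigma ?G (\<lambda>y. {..<height S k y})"
      using mem_iff_less_height height_pos_imp_grid fun_upd_last_in_lattice_pts(1) by fastforce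
    show "(\<lambda>(y, t). y(k := t)) \<in> Sigma ?G (\<lambda>y. {..<height S k y}) \<rightarrow> S"
      using column_pts_eq_lessThan unfolding column_pts_def by auto
    show "(\<lambda>(y, t). y(k := t)) (x(k := 0), x k) = x" for x by simp
    show "(\<lambda>x. (x(k := 0), x k)) ((\<lambda>(y, t). y(k := t)) z) = z"
      if "z \<in> Sigma ?G (\<lambda>y. {..<height S k y})" for z
      using that unfolding grid_def lattice_pts_def by auto
  qed
  then have "card S = card (Sigma ?G (\<lambda>y. {..<height S k y}))" by (rule bij_betw_same_card)
  also have "\<dots> = (\<Sum>y\<in>?G. height S k y)" using finite_grid by (subst card_SigmaI) auto
  finally show ?thesis .
qed

end

lemma sum_grid_incr_shift:
  fixes h :: "(nat \<Rightarrow> nat) \<Rightarrow> nat"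
  assumes i: "i < k" and zero: "\<And>y. y \<in> lattice_pts k \<Longrightarrow> y \<notin> grid k N \<Longrightarrow> h y = 0"
  shows "(\<Sum>y\<in>grid k N. h (incr i y) * (y i + 1)) = (\<Sum>y\<in>grid k N. h y * y i)"
proof -
  let ?G = "grid k N" and ?g = "\<lambda>z. h z * z i"
  let ?U = "incr i ` ?G \<union> ?G"
  have fin: "finite ?U" using finite_grid by simp
  have "(\<Sum>y\<in>?G. h (incr i y) * (y i + 1)) = (\<Sum>z\<in>incr i ` ?G. ?g z)"
    by (subst sum.reindex[OF inj_on_subset[OF inj_incr subset_UNIV]]) (simp add: incr_def)
  also have "\<dots> = (\<Sum>z\<in>?U. ?g z)"
  proof (rule sum.mono_neutral_left[OF fin])
    show "\<forall>z\<in>?U - incr i ` ?G. ?g z = 0"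
    proof (rule ballI, rule ccontr)
      fix z assume z: "z \<in> ?U - incr i ` ?G" and "?g z \<noteq> 0"
      then have "z i \<noteq> 0" by simp
      have "z \<in> ?G" using z by blast
      then have "z(i := z i - 1) \<in> ?G" unfolding grid_def lattice_pts_def by auto
      moreover have "incr i (z(i := z i - 1)) = z" using \<open>z i \<noteq> 0\<close> unfolding incr_def by auto
      ultimately have "z \<in> incr i ` ?G" by (metis image_eqI)
      then show False using z by blast
    qed
  qed auto
  also have "\<dots> = (\<Sum>z\<in>?G. ?g z)"
  proof (rule sum.mono_neutral_right[OF fin])
    show "\<forall>z\<in>?U - ?G. ?g z = 0"
    proof
      fix z assume "z \<in> ?U - ?G"
      then obtain y where "y \<in> ?G" "z = incr i y" "z \<notin> ?G" by auto
      then have "z \<in> lattice_pts k" using incr_in_lattice_pts[OF i] unfolding grid_def by auto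
      then show "?g z = 0" using zero \<open>z \<notin> ?G\<close> by simp
    qed
  qed auto
  finally show ?thesis .
qed

text \<open>Summation by parts along the \<open>i\<close>-th coordinate.\<close>

lemma sum_diff_incr_weighted:
  fixes h :: "(nat \<Rightarrow> nat) \<Rightarrow> nat"
  assumes i: "i < k"
    and mono: "\<And>y. h (incr i y) \<le> h y"
    and zero: "\<And>y. y \<in> lattice_pts k \<Longrightarrow> y \<notin> grid k N \<Longrightarrow> h y = 0"
  shows "(\<Sum>y\<in>grid k N. (h y - h (incr i y)) * (y i + 1)) = (\<Sum>y\<in>grid k N. h y)"
proof -
  let ?G = "grid k N"
  have "(\<Sum>y\<in>?G. (h y - h (incr i y)) * (y i + 1)) + (\<Sum>y\<in>?G. h (incr i y) * (y i + 1))
      = (\<Sum>y\<in>?G. h y * (y i + 1))"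
    unfolding sum.distrib[symmetric]
  proof (rule sum.cong[OF refl])
    fix y
    have "h y - h (incr i y) + h (incr i y) = h y" using mono[of y] by simp
    then show "(h y - h (incr i y)) * (y i + 1) + h (incr i y) * (y i + 1) = h y * (y i + 1)"
      by (metis add_mult_distrib)
  qed
  also have "\<dots> = (\<Sum>y\<in>?G. h y * y i) + (\<Sum>y\<in>?G. h y)"
    by (simp add: sum.distrib algebra_simps)
  finally show ?thesis using sum_grid_incr_shift[where h = h and N = N, OF i zero] by linarith
qed

lemma sum_height_drop_weighted_le:
  assumes L: "lower_set (Suc k) S" and F: "finite S"
  shows "(\<Sum>y\<in>grid k (card S). height_drop S k y * (k + (\<Sum>i<k. y i))) \<le> k * card S"
proof -
  let ?G = "grid k (card S)" and ?h = "height S k"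
  have weighted_i: "(\<Sum>y\<in>?G. height_drop S k y * (y i + 1)) \<le> card S" if i: "i < k" for i
  proof -
    have "(\<Sum>y\<in>?G. height_drop S k y * (y i + 1)) \<le> (\<Sum>y\<in>?G. (?h y - ?h (incr i y)) * (y i + 1))"
      by (intro sum_mono mult_right_mono height_drop_le[OF i]) simp
    also have "\<dots> = (\<Sum>y\<in>?G. ?h y)"
      using sum_diff_incr_weighted[where h = ?h, OF i height_incr_le[OF L F i]] height_pos_imp_grid[OF L F]
      by blast
    finally show ?thesis using card_eq_sum_height[OF L F] by simp
  qed
  have "(\<Sum>y\<in>?G. height_drop S k y * (k + (\<Sum>i<k. y i)))
      = (\<Sum>y\<in>?G. \<Sum>i<k. height_drop S k y * (y i + 1))"
    by (simp add: sum.distrib sum_distrib_left sum_distrib_right algebra_simps)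
  also have "\<dots> = (\<Sum>i<k. \<Sum>y\<in>?G. height_drop S k y * (y i + 1))" by (rule sum.swap)
  also have "\<dots> \<le> (\<Sum>i<k. card S)" by (rule sum_mono) (use weighted_i in blast)
  finally show ?thesis by simp
qed

lemma lower_set_eqI_height:
  assumes "lower_set (Suc k) S" "finite S" "lower_set (Suc k) T" "finite T"
    and "\<And>y. y \<in> lattice_pts k \<Longrightarrow> height S k y = height T k y"
  shows "S = T"
proof (rule set_eqI)
  fix x
  have "x \<in> lattice_pts (Suc k) \<Longrightarrow> height S k (x(k := 0)) = height T k (x(k := 0))"
    using assms(5) fun_upd_last_in_lattice_pts(1) by blast
  then show "x \<in> S \<longleftrightarrow> x \<in> T"
    using mem_iff_less_height[OF assms(1,2), of x] mem_iff_less_height[OF assms(3,4), of x] by auto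
qed

text \<open>At a base point where the heights differ and whose coordinate sum is maximal, the heights of
  all successors agree, so equal drops force equal heights.\<close>

lemma height_drop_determines_height:
  assumes L1: "lower_set (Suc k) S" and F1: "finite S"
    and L2: "lower_set (Suc k) T" and F2: "finite T"
    and card: "card S = card T" and k: "k \<ge> 1"
    and eq: "\<forall>y\<in>grid k (card S). height_drop S k y = height_drop T k y"
  shows "\<forall>y\<in>lattice_pts k. height S k y = height T k y"
proof (rule ccontr)
  define D where "D = {y\<in>lattice_pts k. height S k y \<noteq> height T k y}"
  assume "\<not> ?thesis"
  then have "D \<noteq> {}" unfolding D_def by auto
  have DG: "D \<subseteq> grid k (card S)"
    using height_pos_imp_grid[OF L1 F1] height_pos_imp_grid[OF L2 F2] card
    unfolding D_def by fastforce
  then have finD: "finite D" using finite_grid by (rule finite_subset)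
  define s where "s = Max ((\<lambda>z. \<Sum>i<k. z i) ` D)"
  have "s \<in> (\<lambda>z. \<Sum>i<k. z i) ` D" unfolding s_def using finD \<open>D \<noteq> {}\<close> by simp
  then obtain y where yD: "y \<in> D" and ys: "(\<Sum>i<k. y i) = s" by auto
  have ymax: "(\<Sum>i<k. z i) \<le> s" if "z \<in> D" for z unfolding s_def using finD that by simp
  have y: "y \<in> lattice_pts k" using yD unfolding D_def by simp
  have "height S k (incr i y) = height T k (incr i y)" if i: "i < k" for i
  proof (rule ccontr)
    assume "height S k (incr i y) \<noteq> height T k (incr i y)"
    then have "incr i y \<in> D" using incr_in_lattice_pts[OF i y] unfolding D_def by simp
    then show False using ymax sum_incr[OF i] ys by fastforce
  qed
  then have "Max ((\<lambda>i. height S k (incr i y)) ` {..<k}) = Max ((\<lambda>i. height T k (incr i y)) ` {..<k})"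
    by (metis (no_types, lifting) image_cong lessThan_iff)
  moreover have "height_drop S k y = height_drop T k y" using eq DG yD by auto
  ultimately have "height S k y = height T k y"
    using Max_height_incr_le[OF L1 F1 k, of y] Max_height_incr_le[OF L2 F2 k, of y]
    unfolding height_drop_def by linarith
  then show False using yD unfolding D_def by simp
qed

section \<open>Counting weight-bounded functions\<close>

definition weighted_functions :: "'a set \<Rightarrow> ('a \<Rightarrow> nat) \<Rightarrow> nat \<Rightarrow> nat \<Rightarrow> ('a \<Rightarrow> nat) set" where
  "weighted_functions B W K N = {f \<in> B \<rightarrow>\<^sub>E {..N}. (\<Sum>y\<in>B. f y * W y) \<le> K * N}"

lemma finite_weighted_functions: "finite B \<Longrightarrow> finite (weighted_functions B W K N)"
  unfolding weighted_functions_def by (rule finite_subset[OF _ finite_PiE]) auto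

lemma p_le_card_weighted_functions:
  assumes k: "k \<ge> 1"
  shows "p (Suc k) n \<le> card (weighted_functions (grid k n) (\<lambda>y. k + (\<Sum>i<k. y i)) k n)"
  unfolding p_def
proof (rule card_inj_on_le[where f = "\<lambda>S. restrict (height_drop S k) (grid k n)"])
  let ?C = "{S. lower_set (Suc k) S \<and> finite S \<and> card S = n}"
  show "inj_on (\<lambda>S. restrict (height_drop S k) (grid k n)) ?C"
  proof (rule inj_onI)
    fix S T assume "S \<in> ?C" "T \<in> ?C"
      and e: "restrict (height_drop S k) (grid k n) = restrict (height_drop T k) (grid k n)"
    then have S: "lower_set (Suc k) S" "finite S" "card S = n"
      and T: "lower_set (Suc k) T" "finite T" "card T = n" by auto
    have "\<forall>y\<in>grid k (card S). height_drop S k y = height_drop T k y"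
      using e S(3) by (metis restrict_apply')
    then show "S = T"
      using height_drop_determines_height[OF S(1,2) T(1,2) _ k] lower_set_eqI_height[OF S(1,2) T(1,2)]
        S(3) T(3) by simp
  qed
  show "(\<lambda>S. restrict (height_drop S k) (grid k n)) ` ?C
      \<subseteq> weighted_functions (grid k n) (\<lambda>y. k + (\<Sum>i<k. y i)) k n"
  proof
    fix f assume "f \<in> (\<lambda>S. restrict (height_drop S k) (grid k n)) ` ?C"
    then obtain S where S: "lower_set (Suc k) S" "finite S" "card S = n"
      and f: "f = restrict (height_drop S k) (grid k n)" by auto
    have "height_drop S k y \<le> n" for y
      using height_le_card[OF S(2)] S(3) unfolding height_drop_def by (meson diff_le_self le_trans)
    then show "f \<in> weighted_functions (grid k n) (\<lambda>y. k + (\<Sum>i<k. y i)) k n"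
      using sum_height_drop_weighted_le[OF S(1,2)] S(3) f
      unfolding weighted_functions_def by auto
  qed
  show "finite (weighted_functions (grid k n) (\<lambda>y. k + (\<Sum>i<k. y i)) k n)"
    by (rule finite_weighted_functions[OF finite_grid])
qed

lemma sum_power_le_geometric:
  fixes q :: real assumes "0 \<le> q" "q < 1"
  shows "(\<Sum>j<n. q ^ j) \<le> 1 / (1 - q)"
proof -
  have "(\<Sum>j<n. q ^ j) \<le> (\<Sum>j. q ^ j)"
    by (rule sum_le_suminf) (use assms summable_geometric[of q] in auto)
  then show ?thesis using suminf_geometric[of q] assms by simp
qed

text \<open>Rankin's trick: every admissible function contributes at least one to the weighted sum.\<close>

lemma card_weighted_functions_le:
  fixes B :: "'a set" and W :: "'a \<Rightarrow> nat" and \<tau> :: real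
  assumes B: "finite B" and t: "\<tau> > 0" and K: "K > 0" and W: "\<And>y. y \<in> B \<Longrightarrow> W y > 0"
  shows "real (card (weighted_functions B W K N))
     \<le> exp (\<tau> * N) * (\<Prod>y\<in>B. 1 / (1 - exp (- \<tau> * W y / K)))"
proof -
  let ?M = "weighted_functions B W K N"
  let ?q = "\<lambda>y. exp (- \<tau> * W y / K)"
  let ?T = "\<lambda>f. exp (\<tau> * N) * (\<Prod>y\<in>B. ?q y ^ f y)"
  have finP: "finite (B \<rightarrow>\<^sub>E {..N})" using B by (intro finite_PiE) auto
  have T1: "1 \<le> ?T f" if f: "f \<in> ?M" for f
  proof -
    have "(\<Prod>y\<in>B. ?q y ^ f y) = exp (\<Sum>y\<in>B. - \<tau> * W y / K * f y)"
      using B by (simp add: exp_sum exp_of_nat_mult[symmetric] mult.commute)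
    also have "(\<Sum>y\<in>B. - \<tau> * W y / K * f y) = - \<tau> / K * real (\<Sum>y\<in>B. f y * W y)"
      by (simp add: sum_distrib_left algebra_simps)
    finally have e: "?T f = exp (\<tau> * N - \<tau> / K * real (\<Sum>y\<in>B. f y * W y))"
      by (simp add: exp_add[symmetric])
    have "real (\<Sum>y\<in>B. f y * W y) \<le> K * N"
      using f unfolding weighted_functions_def by (simp del: of_nat_sum) (metis of_nat_le_iff of_nat_mult)
    then have "\<tau> / K * real (\<Sum>y\<in>B. f y * W y) \<le> \<tau> * N"
      using t K by (simp add: field_simps)
    then show ?thesis unfolding e by simp
  qed
  have "real (card ?M) \<le> (\<Sum>f\<in>?M. ?T f)"
    using sum_mono[OF T1, of ?M] by simp
  also have "\<dots> \<le> (\<Sum>f\<in>B \<rightarrow>\<^sub>E {..N}. ?T f)"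
    by (rule sum_mono2[OF finP]) (auto simp: weighted_functions_def intro!: mult_nonneg_nonneg prod_nonneg)
  also have "\<dots> = exp (\<tau> * N) * (\<Prod>y\<in>B. \<Sum>j\<le>N. ?q y ^ j)"
    by (simp add: sum_distrib_left prod_sum_PiE[OF B])
  also have "(\<Prod>y\<in>B. \<Sum>j\<le>N. ?q y ^ j) \<le> (\<Prod>y\<in>B. 1 / (1 - ?q y))"
  proof (rule prod_mono)
    fix y assume y: "y \<in> B"
    have "?q y < 1" using t K W[OF y] by (simp add: field_simps)
    then show "0 \<le> (\<Sum>j\<le>N. ?q y ^ j) \<and> (\<Sum>j\<le>N. ?q y ^ j) \<le> 1 / (1 - ?q y)"
      using sum_power_le_geometric[of "?q y" "Suc N"] by (auto simp: lessThan_Suc_atMost intro: sum_nonneg)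
  qed
  finally show ?thesis by simp
qed

lemma sums_minus_ln_one_minus:
  fixes q :: real assumes "0 \<le> q" "q < 1"
  shows "(\<lambda>n. q ^ n / real n) sums (- ln (1 - q))"
proof -
  have "(\<lambda>n. - ((-(-q)) ^ n) / real n) sums ln (1 + (-q))"
    by (rule ln_series') (use assms in auto)
  then show ?thesis using sums_minus by fastforce
qed

lemma exp_suminf_power_div_eq:
  fixes q :: real assumes "0 \<le> q" "q < 1"
  shows "exp (\<Sum>n. q ^ n / real n) = 1 / (1 - q)"
  using sums_unique[OF sums_minus_ln_one_minus[OF assms], symmetric] assms
  by (simp add: exp_minus inverse_eq_divide)

lemma sum_grid_prod_power_le:
  fixes r :: real assumes r: "0 \<le> r" "r < 1"
  shows "(\<Sum>y\<in>grid k N. \<Prod>i<k. r ^ y i) \<le> (1 / (1 - r)) ^ k"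
proof -
  have bij: "bij_betw (\<lambda>y. restrict y {..<k}) (grid k N) ({..<k} \<rightarrow>\<^sub>E {..<N})"
  proof (rule bij_betwI[where g = "\<lambda>g i. if i < k then g i else 0"])
    show "(\<lambda>g i. if i < k then g i else 0) \<in> ({..<k} \<rightarrow>\<^sub>E {..<N}) \<rightarrow> grid k N"
      unfolding grid_def lattice_pts_def by (auto simp: PiE_iff)
    show "(\<lambda>i. if i < k then restrict y {..<k} i else 0) = y" if "y \<in> grid k N" for y
      using that unfolding grid_def lattice_pts_def by (auto simp: fun_eq_iff)
    show "restrict (\<lambda>i. if i < k then g i else 0) {..<k} = g" if "g \<in> {..<k} \<rightarrow>\<^sub>E {..<N}" for g
      using that by (auto simp: fun_eq_iff PiE_def extensional_def)
  qed (auto simp: grid_def)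
  have "(\<Sum>y\<in>grid k N. \<Prod>i<k. r ^ y i) = (\<Sum>g\<in>{..<k} \<rightarrow>\<^sub>E {..<N}. \<Prod>i<k. r ^ g i)"
    by (subst sum.reindex_bij_betw[OF bij, symmetric]) (auto intro!: sum.cong prod.cong)
  also have "\<dots> = (\<Prod>i<k. \<Sum>t<N. r ^ t)" by (rule prod_sum_PiE[symmetric]) auto
  also have "\<dots> = (\<Sum>t<N. r ^ t) ^ k" by simp
  also have "\<dots> \<le> (1 / (1 - r)) ^ k"
    by (intro power_mono sum_power_le_geometric sum_nonneg) (use r in auto)
  finally show ?thesis .
qed

lemma sum_grid_exp_power_le:
  fixes \<tau> :: real assumes t: "\<tau> > 0" and k: "k \<ge> 1" and j: "j \<ge> 1"
  shows "(\<Sum>y\<in>grid k N. exp (- \<tau> * real (k + (\<Sum>i<k. y i)) / k) ^ j) \<le> (k / (\<tau> * j)) ^ k"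
proof -
  define s where "s = \<tau> * j / k"
  have s: "s > 0" unfolding s_def using t k j by auto
  have r: "0 \<le> exp (- s)" "exp (- s) < 1" using s by auto
  have "exp (- \<tau> * real (k + (\<Sum>i<k. y i)) / k) ^ j = exp (- s) ^ k * (\<Prod>i<k. exp (- s) ^ y i)" for y
  proof -
    have "exp (- \<tau> * real (k + (\<Sum>i<k. y i)) / k) ^ j = exp (real k * - s + (\<Sum>i<k. real (y i) * - s))"
      using k unfolding s_def
      by (simp add: exp_of_nat_mult[symmetric] field_simps sum_distrib_left sum_divide_distrib sum_negf)
    also have "\<dots> = exp (real k * - s) * (\<Prod>i<k. exp (real (y i) * - s))"
      by (simp only: exp_add exp_sum[OF finite_lessThan])
    finally show ?thesis by (simp only: exp_of_nat_mult)
  qed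
  then have "(\<Sum>y\<in>grid k N. exp (- \<tau> * real (k + (\<Sum>i<k. y i)) / k) ^ j)
      = exp (- s) ^ k * (\<Sum>y\<in>grid k N. \<Prod>i<k. exp (- s) ^ y i)"
    by (simp add: sum_distrib_left)
  also have "\<dots> \<le> exp (- s) ^ k * (1 / (1 - exp (- s))) ^ k"
    by (rule mult_left_mono[OF sum_grid_prod_power_le[OF r]]) simp
  also have "\<dots> = (1 / (exp s - 1)) ^ k"
    by (simp add: power_mult_distrib[symmetric] exp_minus field_simps)
  also have "\<dots> \<le> (1 / s) ^ k"
    using exp_ge_add_one_self[of s] s by (intro power_mono divide_left_mono) (auto simp: algebra_simps)
  also have "1 / s = k / (\<tau> * j)" unfolding s_def by simp
  finally show ?thesis .
qed

lemma sums_inverse_squares: "(\<lambda>n. 1 / real n ^ 2) sums (pi ^ 2 / 6)"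
  using inverse_squares_sums sums_Suc_iff[of "\<lambda>n. 1 / real n ^ 2"] by (simp add: add.commute)

lemma sum_grid_exp_power_div_le:
  fixes \<tau> :: real assumes t: "\<tau> > 0" and k: "k \<ge> 1"
  shows "(\<Sum>y\<in>grid k N. exp (- \<tau> * real (k + (\<Sum>i<k. y i)) / k) ^ j / real j)
    \<le> (k / \<tau>) ^ k * (1 / real j ^ 2)"
proof (cases "j = 0")
  case False
  then have j: "j \<ge> 1" by simp
  have "(\<Sum>y\<in>grid k N. exp (- \<tau> * real (k + (\<Sum>i<k. y i)) / k) ^ j / real j)
      \<le> (k / (\<tau> * j)) ^ k / real j"
    unfolding sum_divide_distrib[symmetric]
    by (rule divide_right_mono[OF sum_grid_exp_power_le[OF t k j]]) simp
  also have "\<dots> = (k / \<tau>) ^ k * (1 / real j ^ (k + 1))"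
    by (simp add: power_divide power_mult_distrib field_simps)
  also have "\<dots> \<le> (k / \<tau>) ^ k * (1 / real j ^ 2)"
    using j k t by (intro mult_left_mono divide_left_mono power_increasing) auto
  finally show ?thesis .
qed simp

lemma p_le_exp:
  fixes \<tau> :: real
  assumes k: "k \<ge> 1" and t: "\<tau> > 0"
  shows "real (p (Suc k) n) \<le> exp (\<tau> * n + (k / \<tau>) ^ k * (pi ^ 2 / 6))"
proof -
  let ?G = "grid k n"
  let ?q = "\<lambda>y. exp (- \<tau> * real (k + (\<Sum>i<k. y i)) / k)"
  have q: "0 \<le> ?q y" "?q y < 1" for y
  proof -
    have "- \<tau> * real (k + (\<Sum>i<k. y i)) / k < 0"
      using t k by (intro divide_neg_pos mult_neg_pos) (auto simp del: of_nat_add)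
    then show "0 \<le> ?q y" "?q y < 1" by auto
  qed
  have ln_summable: "summable (\<lambda>j. ?q y ^ j / real j)" for y
    using sums_minus_ln_one_minus[OF q] sums_summable by blast
  have "real (p (Suc k) n) \<le> real (card (weighted_functions ?G (\<lambda>y. k + (\<Sum>i<k. y i)) k n))"
    using p_le_card_weighted_functions[OF k, of n] by linarith
  also have "\<dots> \<le> exp (\<tau> * n) * (\<Prod>y\<in>?G. 1 / (1 - ?q y))"
    by (rule card_weighted_functions_le) (use k t finite_grid in auto)
  also have "(\<Prod>y\<in>?G. 1 / (1 - ?q y)) = exp (\<Sum>y\<in>?G. \<Sum>j. ?q y ^ j / real j)"
    by (simp only: exp_sum[OF finite_grid] exp_suminf_power_div_eq[OF q])
  also have "(\<Sum>y\<in>?G. \<Sum>j. ?q y ^ j / real j) = (\<Sum>j. \<Sum>y\<in>?G. ?q y ^ j / real j)"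
    by (rule suminf_sum[symmetric]) (rule ln_summable)
  also have "\<dots> \<le> (\<Sum>j. (k / \<tau>) ^ k * (1 / real j ^ 2))"
  proof (rule suminf_le)
    show "summable (\<lambda>j. \<Sum>y\<in>?G. ?q y ^ j / real j)"
      by (rule summable_sum) (rule ln_summable)
    show "summable (\<lambda>j. (k / \<tau>) ^ k * (1 / real j ^ 2))"
      by (rule summable_mult) (use sums_inverse_squares sums_summable in blast)
  qed (rule sum_grid_exp_power_div_le[OF t k])
  also have "\<dots> = (k / \<tau>) ^ k * (pi ^ 2 / 6)"
    using sums_unique[OF sums_inverse_squares] suminf_mult sums_summable[OF sums_inverse_squares] by metis
  finally show ?thesis using exp_gt_zero[of "\<tau> * n"]
    by (simp add: exp_add mult_left_mono order_trans)
qed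

text \<open>The choice \<open>\<tau> = k n powr (-1/d)\<close> makes both exponents in \<open>p_le_exp\<close> proportional
  to \<open>n powr (1 - 1/d)\<close>.\<close>

lemma ln_p_le:
  assumes k: "k \<ge> 1" and n: "n \<ge> 1"
  shows "ln (real (p (Suc k) n)) \<le> (k + pi ^ 2 / 6) * real n powr (1 - 1 / real (Suc k))"
proof (cases "p (Suc k) n = 0")
  case False
  define d where "d = real (Suc k)"
  define \<tau> where "\<tau> = k * real n powr (- 1 / d)"
  have t: "\<tau> > 0" unfolding \<tau>_def using k n by simp
  have "\<tau> * n = k * real n powr (1 - 1 / d)"
    using n unfolding \<tau>_def by (simp add: powr_add[symmetric] powr_minus_divide divide_simps)
  moreover have "(k / \<tau>) ^ k = real n powr (1 - 1 / d)"
  proof -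
    have "k / \<tau> = real n powr (1 / d)" unfolding \<tau>_def using k n by (simp add: powr_minus_divide)
    then have "(k / \<tau>) ^ k = real n powr (1 / d * k)" using n by (simp add: powr_realpow[symmetric] powr_powr)
    also have "1 / d * k = 1 - 1 / d" unfolding d_def by (simp add: field_simps)
    finally show ?thesis .
  qed
  moreover have "ln (real (p (Suc k) n)) \<le> ln (exp (\<tau> * n + (k / \<tau>) ^ k * (pi ^ 2 / 6)))"
    using p_le_exp[OF k t, of n] False by (subst ln_le_cancel_iff) auto
  ultimately show ?thesis unfolding d_def by (simp add: algebra_simps)
qed (simp add: pi_gt_zero)

section \<open>Staircase lower sets over a simplex\<close>

definition simplex_pts :: "nat \<Rightarrow> nat \<Rightarrow> (nat \<Rightarrow> nat) set" where
  "simplex_pts j m = {z \<in> lattice_pts j. (\<Sum>i<j. z i) < m}"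

lemma simplex_pts_subset_grid: "simplex_pts j m \<subseteq> grid j m"
proof
  fix z assume z: "z \<in> simplex_pts j m"
  have "z i \<le> (\<Sum>i<j. z i)" if "i < j" for i using that by (intro member_le_sum) auto
  then show "z \<in> grid j m" using z unfolding simplex_pts_def grid_def by (auto intro: le_less_trans)
qed

lemma finite_simplex_pts: "finite (simplex_pts j m)"
  using finite_subset[OF simplex_pts_subset_grid finite_grid] .

text \<open>Stars and bars: append the slack \<open>m - 1 - (\<Sum>i<j. z i)\<close> as a last entry.\<close>

lemma bij_betw_simplex_pts_lists:
  assumes m: "m \<ge> 1"
  shows "bij_betw (\<lambda>z. map z [0..<j] @ [m - 1 - (\<Sum>i<j. z i)]) (simplex_pts j m)
    {l. length l = Suc j \<and> sum_list l = m - 1}"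
    (is "bij_betw ?to_list _ ?L")
proof -
  let ?of_list = "\<lambda>l::nat list. (\<lambda>i. if i < j then l ! i else 0)"
  have sum_map: "sum_list (map z [0..<j]) = (\<Sum>i<j. z i)" for z :: "nat \<Rightarrow> nat"
    by (simp add: interv_sum_list_conv_sum_set_nat atLeast0LessThan)
  have split: "l = take j l @ [l ! j]" "sum_list l = (\<Sum>i<j. ?of_list l i) + l ! j"
    if "l \<in> ?L" for l
  proof -
    show l: "l = take j l @ [l ! j]" using that take_Suc_conv_app_nth[of j l] by simp
    have "sum_list (take j l) = (\<Sum>i<j. ?of_list l i)"
      using that by (simp add: sum_list_sum_nth atLeast0LessThan min_def)
    then show "sum_list l = (\<Sum>i<j. ?of_list l i) + l ! j"
      using arg_cong[OF l, of sum_list] by simp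
  qed
  show ?thesis
  proof (rule bij_betwI[where g = ?of_list])
    show "?to_list \<in> simplex_pts j m \<rightarrow> ?L"
      using sum_map unfolding simplex_pts_def by auto
    show "?of_list \<in> ?L \<rightarrow> simplex_pts j m"
    proof
      fix l assume "l \<in> ?L"
      then have "(\<Sum>i<j. ?of_list l i) \<le> m - 1" using split(2) by fastforce
      then show "?of_list l \<in> simplex_pts j m" using m unfolding simplex_pts_def lattice_pts_def by auto
    qed
    show "?of_list (?to_list z) = z" if "z \<in> simplex_pts j m" for z
      using that unfolding simplex_pts_def lattice_pts_def by (auto simp: nth_append)
    show "?to_list (?of_list l) = l" if l: "l \<in> ?L" for l
    proof -
      have "map (?of_list l) [0..<j] = take j l" using l by (intro nth_equalityI) auto
      moreover have "m - 1 - (\<Sum>i<j. ?of_list l i) = l ! j" using l split(2)[OF l] by simp arith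
      ultimately show ?thesis using split(1)[OF l] by simp
    qed
  qed
qed

lemma card_simplex_pts:
  assumes m: "m \<ge> 1"
  shows "card (simplex_pts j m) = (m - 1 + j) choose j"
proof -
  have "card (simplex_pts j m) = card {l. length l = Suc j \<and> sum_list l = m - 1}"
    by (rule bij_betw_same_card[OF bij_betw_simplex_pts_lists[OF m]])
  also have "\<dots> = (m - 1 + j) choose (m - 1)" by (simp add: card_length_sum_list)
  also have "\<dots> = (m - 1 + j) choose j" by (simp add: binomial_symmetric[of "m - 1" "m - 1 + j", simplified])
  finally show ?thesis .
qed

lemma card_simplex_pts_ge:
  assumes "j \<ge> 1" shows "m \<le> card (simplex_pts j m)"
proof -
  have "axis_pt ` {..<m} \<subseteq> simplex_pts j m"
  proof
    fix z assume "z \<in> axis_pt ` {..<m}"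
    then obtain t where "t < m" "z = axis_pt t" by auto
    moreover have "(\<Sum>i<j. axis_pt t i) = t" using assms by (simp add: axis_pt_def sum.delta)
    ultimately show "z \<in> simplex_pts j m"
      using axis_pt_in_lattice_pts[OF assms] unfolding simplex_pts_def by simp
  qed
  then have "card (axis_pt ` {..<m}) \<le> card (simplex_pts j m)" by (rule card_mono[OF finite_simplex_pts])
  then show ?thesis by (simp add: card_image inj_on_def)
qed

text \<open>Each choice \<open>e\<close> of a defect in \<open>{0, 1, 2}\<close> at every base point \<open>y\<close> of the
  \<open>k\<close>-dimensional simplex yields a lower set with column heights \<open>2 (m - |y|) - e y\<close>:
  the defects are too small to break monotonicity.\<close>

definition staircase :: "nat \<Rightarrow> nat \<Rightarrow> ((nat \<Rightarrow> nat) \<Rightarrow> nat) \<Rightarrow> (nat \<Rightarrow> nat) set" where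
  "staircase k m e = {x \<in> lattice_pts (Suc k). x(k := 0) \<in> simplex_pts k m \<and>
     x k + e (x(k := 0)) < 2 * (m - (\<Sum>i<k. x i))}"

lemma sum_less_if_below:
  fixes x y :: "nat \<Rightarrow> nat"
  assumes "x \<in> lattice_pts k" "y \<in> lattice_pts k" "\<forall>i<k. x i \<le> y i" "x \<noteq> y"
  shows "(\<Sum>i<k. x i) < (\<Sum>i<k. y i)"
proof -
  obtain i where ne: "x i \<noteq> y i" using assms(4) by auto
  have "i < k"
  proof (rule ccontr)
    assume "\<not> i < k"
    then show False using ne assms(1,2) unfolding lattice_pts_def by simp
  qed
  moreover have "x i < y i" using assms(3) ne \<open>i < k\<close> by (simp add: le_neq_implies_less)
  ultimately show ?thesis using assms(3) by (intro sum_strict_mono_ex1) auto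
qed

lemma lower_set_staircase:
  assumes e: "e \<in> simplex_pts k m \<rightarrow>\<^sub>E {..2}"
  shows "lower_set (Suc k) (staircase k m e)"
  unfolding lower_set_def
proof (intro conjI ballI impI)
  show "staircase k m e \<subseteq> lattice_pts (Suc k)" unfolding staircase_def by auto
  fix x x' assume x: "x \<in> staircase k m e" and x': "x' \<in> lattice_pts (Suc k)"
    and le: "\<forall>i<Suc k. x' i \<le> x i"
  let ?y = "x(k := 0)" and ?y' = "x'(k := 0)"
  have y: "?y \<in> simplex_pts k m" and xk: "x k + e ?y < 2 * (m - (\<Sum>i<k. x i))"
    using x unfolding staircase_def by auto
  have y'l: "?y' \<in> lattice_pts k" using x' by (rule fun_upd_last_in_lattice_pts)
  have sums: "(\<Sum>i<k. x' i) \<le> (\<Sum>i<k. x i)" using le by (intro sum_mono) auto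
  then have y': "?y' \<in> simplex_pts k m"
    using y y'l unfolding simplex_pts_def by (simp add: sum_fun_upd_eq)
  have "x' k + e ?y' < 2 * (m - (\<Sum>i<k. x' i))"
  proof (cases "?y' = ?y")
    case True
    then have "(\<Sum>i<k. x' i) = (\<Sum>i<k. x i)"
      using sum_fun_upd_eq[where x = x' and v = 0] sum_fun_upd_eq[where x = x and v = 0] True
      by metis
    moreover have "x' k \<le> x k" using le by simp
    ultimately show ?thesis using xk True by simp
  next
    case False
    then have "(\<Sum>i<k. x' i) < (\<Sum>i<k. x i)"
      using sum_less_if_below[OF y'l, of ?y] y le unfolding simplex_pts_def by (simp add: sum_fun_upd_eq)
    moreover have "e ?y' \<le> 2" using e y' by (auto simp: PiE_iff)
    moreover have "(\<Sum>i<k. x i) < m" using y unfolding simplex_pts_def by (simp add: sum_fun_upd_eq)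
    moreover have "x' k \<le> x k" using le by simp
    ultimately show ?thesis using xk by linarith
  qed
  then show "x' \<in> staircase k m e" using x' y' unfolding staircase_def by auto
qed

text \<open>Halving the last coordinate embeds a staircase into two copies of the
  \<open>(k + 1)\<close>-dimensional simplex.\<close>

lemma card_staircase_le:
  "finite (staircase k m e) \<and> card (staircase k m e) \<le> 2 * card (simplex_pts (Suc k) m)"
proof -
  let ?R = "{x \<in> lattice_pts (Suc k). (\<Sum>i<k. x i) + x k div 2 < m}"
  let ?f = "\<lambda>x :: nat \<Rightarrow> nat. (x(k := x k div 2), x k mod 2)"
  have inj: "inj_on ?f ?R"
  proof (rule inj_onI)
    fix a b assume e: "?f a = ?f b"
    show "a = b"
    proof
      fix i show "a i = b i"
      proof (cases "i = k")
        case True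
        have "a k div 2 = b k div 2" using fun_cong[OF arg_cong[OF e, of fst], of k] by simp
        moreover have "a k mod 2 = b k mod 2" using arg_cong[OF e, of snd] by simp
        ultimately show ?thesis using True by (metis div_mult_mod_eq)
      next
        case False
        then show ?thesis using fun_cong[OF arg_cong[OF e, of fst], of i] by simp
      qed
    qed
  qed
  have sub: "?f ` ?R \<subseteq> simplex_pts (Suc k) m \<times> {0, 1}"
  proof
    fix z assume "z \<in> ?f ` ?R"
    then obtain x where x: "x \<in> ?R" "z = ?f x" by auto
    have "x(k := x k div 2) \<in> lattice_pts (Suc k)" using x unfolding lattice_pts_def by auto
    moreover have "(\<Sum>i<Suc k. (x(k := x k div 2)) i) = (\<Sum>i<k. x i) + x k div 2"
      by (simp add: sum_fun_upd_eq)
    ultimately show "z \<in> simplex_pts (Suc k) m \<times> {0, 1}" using x unfolding simplex_pts_def by auto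
  qed
  have fin: "finite (simplex_pts (Suc k) m \<times> {0::nat, 1})" using finite_simplex_pts by simp
  have "finite ?R" using finite_imageD[OF finite_subset[OF sub fin] inj] .
  moreover have "card ?R \<le> 2 * card (simplex_pts (Suc k) m)"
    using card_inj_on_le[OF inj sub fin] by (simp add: card_cartesian_product)
  moreover have "staircase k m e \<subseteq> ?R" unfolding staircase_def by auto
  ultimately show ?thesis using card_mono[of ?R "staircase k m e"] finite_subset by fastforce
qed

lemma inj_on_staircase: "inj_on (staircase k m) (simplex_pts k m \<rightarrow>\<^sub>E {..2})"
proof (rule inj_onI)
  fix e1 e2 assume e1: "e1 \<in> simplex_pts k m \<rightarrow>\<^sub>E {..2}" and e2: "e2 \<in> simplex_pts k m \<rightarrow>\<^sub>E {..2}"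
    and eq: "staircase k m e1 = staircase k m e2"
  show "e1 = e2"
  proof (rule PiE_ext[OF e1 e2])
    fix y assume y: "y \<in> simplex_pts k m"
    have yl: "y \<in> lattice_pts k" and ys: "(\<Sum>i<k. y i) < m" using y unfolding simplex_pts_def by auto
    let ?c = "2 * (m - (\<Sum>i<k. y i))"
    have col: "column_pts (staircase k m e) k y = {..<?c - e y}" for e
    proof -
      have "(y(k := t))(k := 0) = y" for t using yl unfolding lattice_pts_def by (auto simp: fun_eq_iff)
      then show ?thesis using y fun_upd_last_in_lattice_pts(2)[OF yl]
        unfolding column_pts_def staircase_def by (auto simp: sum_fun_upd_eq)
    qed
    have "{..<?c - e1 y} = {..<?c - e2 y}" using col[of e1] col[of e2] eq by simp
    then have "?c - e1 y = ?c - e2 y" by (metis card_lessThan)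
    moreover have "e1 y \<le> 2" "e2 y \<le> 2" using e1 e2 y by (auto simp: PiE_iff)
    ultimately show "e1 y = e2 y" using ys by linarith
  qed
qed

lemma three_pow_card_simplex_pts_le:
  assumes m: "2 * card (simplex_pts (Suc k) m) \<le> n"
  shows "3 ^ card (simplex_pts k m) \<le> (n + 1) * p (Suc k) n"
proof -
  let ?E = "simplex_pts k m \<rightarrow>\<^sub>E {..2::nat}"
  have "3 ^ card (simplex_pts k m) = card (staircase k m ` ?E)"
    by (simp add: card_image[OF inj_on_staircase] card_PiE finite_simplex_pts)
  also have "\<dots> \<le> (n + 1) * p (Suc k) n"
  proof (rule card_family_of_lower_sets_le)
    fix T assume "T \<in> staircase k m ` ?E"
    then obtain e where "e \<in> ?E" "T = staircase k m e" by auto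
    then show "lower_set (Suc k) T \<and> finite T \<and> card T \<le> n"
      using lower_set_staircase card_staircase_le[of k m e] m by auto
  qed simp
  finally show ?thesis .
qed

section \<open>Numerical estimates\<close>

lemma two_pow_mult_fact_le: "2 ^ k * fact k \<le> (real k + 1) ^ k"
proof (induction k)
  case (Suc k)
  have "1 + real (Suc k) * (1 / (real k + 1)) \<le> (1 + 1 / (real k + 1)) ^ Suc k"
    by (rule Bernoulli_inequality) (simp add: field_simps)
  then have "2 \<le> ((real k + 2) / (real k + 1)) ^ Suc k"
    by (simp add: field_simps)
  then have "2 * (real k + 1) ^ Suc k \<le> ((real k + 2) / (real k + 1)) ^ Suc k * (real k + 1) ^ Suc k"
    by (intro mult_right_mono) auto
  then have Bernoulli: "2 * (real k + 1) ^ Suc k \<le> (real k + 2) ^ Suc k"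
    by (simp add: power_divide)
  have "2 ^ Suc k * fact (Suc k) = 2 * (real k + 1) * (2 ^ k * fact k)" by (simp add: algebra_simps)
  also have "\<dots> \<le> 2 * (real k + 1) * (real k + 1) ^ k" by (rule mult_left_mono[OF Suc.IH]) simp
  also have "\<dots> = 2 * (real k + 1) ^ Suc k" by simp
  also have "\<dots> \<le> (real k + 2) ^ Suc k" by (rule Bernoulli)
  finally show ?case by (simp add: add.commute)
qed simp

lemma one_plus_power_le:
  fixes x :: real assumes "0 \<le> x" "real k * x < 1"
  shows "(1 + x) ^ k \<le> 1 / (1 - real k * x)"
  using assms(2)
proof (induction k)
  case (Suc k)
  have kx: "real k * x < 1" using Suc.prems assms(1) by (simp add: algebra_simps)
  have "(1 + x) ^ Suc k \<le> (1 + x) * (1 / (1 - real k * x))"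
    using mult_left_mono[OF Suc.IH[OF kx], of "1 + x"] assms(1) by simp
  also have "\<dots> \<le> 1 / (1 - real (Suc k) * x)"
  proof -
    have "(1 + x) * (1 - real (Suc k) * x) \<le> 1 - real k * x"
      using assms(1) by (simp add: algebra_simps)
    then show ?thesis using Suc.prems kx by (simp add: field_simps)
  qed
  finally show ?case .
qed simp

text \<open>Raising to the power \<open>d = k + 1\<close> reduces this to \<open>2\<^sup>k (k!)\<^sup>d \<le> (d!)\<^sup>k\<close>.\<close>

lemma power_mult_fact_less:
  fixes X M :: real
  assumes k: "k \<ge> 1" and X: "X \<ge> 0" and M: "M \<ge> 0"
    and h: "X ^ Suc k * fact (Suc k) < 2 * M ^ Suc k"
  shows "X ^ k * fact k < M ^ k"
proof -
  let ?d = "Suc k"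
  have "(X ^ k * fact k) ^ ?d * fact ?d ^ k = (X ^ ?d * fact ?d) ^ k * fact k ^ ?d"
    by (simp only: power_mult_distrib power_mult[symmetric] mult.commute mult.left_commute)
  also have "\<dots> < (2 * M ^ ?d) ^ k * fact k ^ ?d"
    by (rule mult_strict_right_mono[OF power_strict_mono[OF h]]) (use X k in auto)
  also have "\<dots> = M ^ (?d * k) * (2 ^ k * fact k ^ ?d)"
    by (simp add: power_mult_distrib power_mult[symmetric] power_add mult_ac)
  also have "\<dots> \<le> M ^ (?d * k) * fact ?d ^ k"
  proof (rule mult_left_mono)
    have "2 ^ k * (fact k :: real) ^ ?d = (2 ^ k * fact k) * fact k ^ k" by (simp add: algebra_simps)
    also have "\<dots> \<le> (real k + 1) ^ k * fact k ^ k" by (rule mult_right_mono[OF two_pow_mult_fact_le]) simp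
    also have "\<dots> = (fact ?d) ^ k" by (simp add: power_mult_distrib add.commute)
    finally show "2 ^ k * (fact k :: real) ^ ?d \<le> (fact ?d) ^ k" .
  qed (use M in simp)
  also have "\<dots> = (M ^ k) ^ ?d * fact ?d ^ k" by (simp only: power_mult[symmetric] mult.commute)
  finally have "(X ^ k * fact k) ^ ?d < (M ^ k) ^ ?d" by simp
  then show ?thesis by (rule power_less_imp_less_base) (use M in simp)
qed

lemma binomial_mult_fact_ge:
  assumes "m \<ge> 1"
  shows "real m ^ k \<le> real ((m - 1 + k) choose k) * fact k"
proof -
  have "real ((m - 1 + k) choose k) * fact k = (\<Prod>i = 0..<k. real (m - 1 + k) - real i)"
    by (simp add: binomial_gbinomial gbinomial_mult_fact')
  also have "\<dots> \<ge> (\<Prod>i = 0..<k. real m)"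
    by (rule prod_mono) (use assms in auto)
  finally show ?thesis by simp
qed

lemma binomial_mult_fact_le: "real ((m + d) choose d) * fact d \<le> (real m + real d) ^ d"
proof -
  have "((m + d) choose d) * fact d \<le> (m + d) ^ d" by (rule binomial_fact_pow)
  then show ?thesis by (metis of_nat_add of_nat_fact of_nat_le_iff of_nat_mult of_nat_power)
qed

lemma ln_3_ge: "ln (3::real) \<ge> 109 / 100"
proof -
  have "ln (exp 1 / (3::real)) \<le> exp 1 / 3 - 1" by (rule ln_le_minus_one) simp
  moreover have "ln (exp 1 / (3::real)) = 1 - ln 3" by (simp add: ln_div)
  ultimately show ?thesis using e_less_272 by simp
qed

lemma exp_5_ge: "exp (5::real) \<ge> 143"
proof -
  have "exp 1 \<ge> (2.7::real)" using e_approx_32 unfolding abs_le_iff by simp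
  then have "2.7 ^ 5 \<le> exp (1::real) ^ 5" by (rule power_mono) simp
  moreover have "(143::real) \<le> 2.7 ^ 5" by (simp add: eval_nat_numeral)
  ultimately show ?thesis by (simp add: exp_of_nat_mult[symmetric])
qed

lemma ln_le_div_exp: "x > 0 \<Longrightarrow> ln x \<le> x / exp c + c - 1" for x c :: real
  using ln_le_minus_one[of "x / exp c"] by (simp add: ln_div)

lemma ln_le_two_sqrt: "x > 0 \<Longrightarrow> ln x \<le> 2 * sqrt x" for x :: real
  using ln_le_minus_one[of "sqrt x"] by (simp add: ln_sqrt)

lemma key_inequality_two:
  fixes m :: real assumes m: "m \<ge> 150"
  shows "2 * ln (m + 2) \<le> m * ln 3 - (m + 2)"
proof -
  have "ln (m + 2) \<le> (m + 2) / exp 5 + 5 - 1" by (rule ln_le_div_exp) (use m in simp)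
  also have "(m + 2) / exp 5 \<le> (m + 2) / 143" using exp_5_ge m by (intro divide_left_mono) auto
  finally have "ln (m + 2) \<le> m / 143 + 2 / 143 + 4" by (simp add: add_divide_distrib)
  moreover have "m * ln 3 \<ge> m * (109 / 100)" using ln_3_ge m by (intro mult_left_mono) auto
  ultimately show ?thesis using m by linarith
qed

lemma power_add_le:
  fixes m a :: real
  assumes m: "m > 0" and a: "a \<ge> 0" and small: "2 * real k * a \<le> m"
  shows "(m + a) ^ k \<le> m ^ k * (1 + 2 * real k * a / m)"
proof -
  define x where "x = real k * (a / m)"
  have x: "0 \<le> x" "x \<le> 1 / 2" unfolding x_def using m a small by (simp_all add: field_simps)
  have "(m + a) ^ k = m ^ k * (1 + a / m) ^ k" using m by (simp add: power_mult_distrib[symmetric] field_simps)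
  also have "(1 + a / m) ^ k \<le> 1 / (1 - x)"
    unfolding x_def by (rule one_plus_power_le) (use x m a in \<open>auto simp: x_def\<close>)
  also have "1 / (1 - x) \<le> 1 + 2 * x"
  proof -
    have "0 \<le> x * (1 - 2 * x)" using x by simp
    then have "1 \<le> (1 + 2 * x) * (1 - x)" by (simp add: algebra_simps)
    then show ?thesis using x by (simp add: field_simps)
  qed
  finally show ?thesis using m unfolding x_def by (simp add: mult_left_mono field_simps)
qed

lemma ln_3_power_minus_power_add_ge:
  fixes m a :: real
  assumes m: "m > 0" and a: "a \<ge> 0" and small: "200 * real k * a \<le> m"
  shows "0.08 * m ^ k \<le> m ^ k * ln 3 - (m + a) ^ k"
proof -
  have "2 * real k * a \<le> 0.01 * m" using small by simp
  then have "(m + a) ^ k \<le> m ^ k * (1 + 2 * real k * a / m)" "2 * real k * a / m \<le> 0.01"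
    using power_add_le[OF m a, of k] m by (simp_all add: field_simps)
  moreover have "m ^ k * (1 + 2 * real k * a / m) \<le> m ^ k * 1.01"
    using \<open>2 * real k * a / m \<le> 0.01\<close> m by (intro mult_left_mono) auto
  ultimately have "(m + a) ^ k \<le> m ^ k * 1.01" by linarith
  moreover have "m ^ k * 1.09 \<le> m ^ k * ln 3" using ln_3_ge m by (intro mult_left_mono) auto
  ultimately show ?thesis by simp
qed

lemma power_mult_sqrt_le:
  fixes m a :: real
  assumes k: "k \<ge> 1" and m: "m > 0" "real k \<le> m" and a: "75 / 2 * real k * a \<le> sqrt m"
  shows "real k ^ k * a * (3 * sqrt m) \<le> 0.08 * m ^ k"
proof -
  have "3 * real k * a * sqrt m \<le> 0.08 * sqrt m * sqrt m"
    using a m by (intro mult_right_mono) auto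
  then have "3 * real k * a * sqrt m \<le> 0.08 * m" using m by (simp add: mult.assoc)
  moreover have "real k ^ (k - 1) \<le> m ^ (k - 1)" using m by (intro power_mono) auto
  ultimately have "(3 * real k * a * sqrt m) * real k ^ (k - 1) \<le> (0.08 * m) * m ^ (k - 1)"
    by (rule mult_mono) (use m in auto)
  moreover have "real k ^ k = real k * real k ^ (k - 1)" "m ^ k = m * m ^ (k - 1)"
    using k by (simp_all add: power_eq_if)
  ultimately show ?thesis by (simp add: algebra_simps)
qed

lemma key_inequality_large:
  fixes m :: real and k :: nat
  assumes k: "k \<ge> 2" and m: "m \<ge> 1407 * (real k + 1) ^ 4"
  shows "fact k * (real k + 1) * ln (m + (real k + 1)) \<le> m ^ k * ln 3 - (m + (real k + 1)) ^ k"
proof -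
  define d where "d = real k + 1"
  have d: "d \<ge> 3" "real k \<le> d" unfolding d_def using k by simp_all
  have "d ^ 2 \<le> d ^ 4" using d by (intro power_increasing) auto
  moreover have "0 \<le> d ^ 2" by simp
  ultimately have md: "200 * d ^ 2 \<le> m" using m unfolding d_def by linarith
  have mpos: "m > 0" "sqrt m > 0" using md d by (auto intro: less_le_trans[of 0 "200 * d ^ 2"])
  have kd: "real k * d \<le> d ^ 2" using d by (simp add: power2_eq_square mult_right_mono)
  have "d \<le> d ^ 2" using d by (simp add: power2_eq_square)
  then have km: "real k \<le> m" "m + d \<le> 9 / 4 * m" using d md mpos by linarith+
  have main: "0.08 * m ^ k \<le> m ^ k * ln 3 - (m + d) ^ k"
    using ln_3_power_minus_power_add_ge[OF mpos(1)] kd md d by simp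
  have "ln (m + d) \<le> 3 * sqrt m"
  proof -
    have "ln (m + d) \<le> 2 * sqrt (m + d)" by (rule ln_le_two_sqrt) (use mpos d in simp)
    also have "\<dots> \<le> 2 * sqrt ((3 / 2) ^ 2 * m)"
      using km by (simp add: power2_eq_square)
    also have "\<dots> = 3 * sqrt m" by (simp add: real_sqrt_mult)
    finally show ?thesis .
  qed
  then have "fact k * d * ln (m + d) \<le> real k ^ k * d * (3 * sqrt m)"
    using fact_le_power[of k] d mpos by (intro mult_mono) auto
  also have "\<dots> \<le> 0.08 * m ^ k"
  proof (rule power_mult_sqrt_le)
    have "(75 / 2 * d ^ 2) ^ 2 = 5625 / 4 * d ^ 4" by (simp add: power2_eq_square power4_eq_xxxx)
    moreover have "0 \<le> d ^ 4" by simp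
    ultimately have "(75 / 2 * d ^ 2) ^ 2 \<le> m" using m unfolding d_def by linarith
    then have "75 / 2 * d ^ 2 \<le> sqrt m" by (rule real_le_rsqrt)
    then show "75 / 2 * real k * d \<le> sqrt m" using kd by simp
  qed (use k km mpos in auto)
  finally show ?thesis using main unfolding d_def by linarith
qed

lemma key_inequality:
  fixes k m :: nat
  assumes k: "k \<ge> 1" and big: "real (Suc k) powr (12 * ln (real (Suc k))) < real m + real (Suc k)"
  shows "fact k * real (Suc k) * ln (real m + real (Suc k)) \<le> real m ^ k * ln 3 - (real m + real (Suc k)) ^ k"
proof (cases "k = 1")
  case True
  have "exp (16 / 3) \<le> exp (12 * ln 2 * ln (2::real))"
    using mult_mono[OF ln2_ge_two_thirds ln2_ge_two_thirds] by simp
  also have "\<dots> < real m + 2" using big True by (simp add: powr_def)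
  finally have "exp (16 / 3) < real m + 2" .
  moreover have "exp (16 / 3 :: real) \<ge> 143 * (1 + 1 / 3)"
    using mult_mono[OF exp_5_ge exp_ge_add_one_self[of "1 / 3"]] by (simp add: exp_add[symmetric])
  ultimately have "real m \<ge> 150" by simp
  then show ?thesis using key_inequality_two True by simp
next
  case False
  define d where "d = real (Suc k)"
  have d: "d \<ge> 3" unfolding d_def using k False by simp
  have "d ^ 13 = d powr 13" using d by (simp add: powr_realpow)
  also have "\<dots> \<le> d powr (12 * ln d)"
  proof (rule powr_mono)
    have "ln 3 \<le> ln d" using d by simp
    then show "13 \<le> 12 * ln d" using ln_3_ge by linarith
  qed (use d in simp)
  finally have "d ^ 13 < real m + d" using big unfolding d_def by simp
  moreover have "1408 * d ^ 4 \<le> d ^ 9 * d ^ 4"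
    using power_mono[OF d, of 9] by (intro mult_right_mono) auto
  moreover have "d ^ 9 * d ^ 4 = d ^ 13" by (simp flip: power_add)
  moreover have "d \<le> d ^ 4" using d by (simp add: power_increasing[of 1 4 d, simplified])
  ultimately have "1407 * d ^ 4 \<le> real m" by linarith
  then have "1407 * (real k + 1) ^ 4 \<le> real m" unfolding d_def by (simp add: add.commute)
  then show ?thesis using key_inequality_large[of k "real m"] False k by (simp add: add.commute)
qed

section \<open>Lower bound\<close>

lemma simplex_level_upper_bound:
  assumes d: "d \<ge> 2" and upper: "n < 2 * card (simplex_pts d (m + 1))"
  shows "(real n + 1) * fact d \<le> 2 * (real m + real d) ^ d"
    and "real n + 1 \<le> (real m + real d) ^ d"
proof -
  have "real n + 1 \<le> 2 * real ((m + d) choose d)"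
    using upper card_simplex_pts[of "m + 1" d] by simp
  then have "(real n + 1) * fact d \<le> 2 * (real ((m + d) choose d) * fact d)"
    using mult_right_mono[of _ _ "fact d :: real"] by simp
  then show nM: "(real n + 1) * fact d \<le> 2 * (real m + real d) ^ d"
    using binomial_mult_fact_le[of m d] by linarith
  have "(real n + 1) * 2 \<le> (real n + 1) * fact d"
    using fact_mono[of 2 d] d by (intro mult_left_mono) auto
  then have "(real n + 1) * 2 \<le> 2 * (real m + real d) ^ d" using nM by linarith
  then show "real n + 1 \<le> (real m + real d) ^ d" by simp
qed

lemma powr_mult_fact_less_of_simplex_level:
  assumes k: "k \<ge> 1" and upper: "n < 2 * card (simplex_pts (Suc k) (m + 1))"
  shows "real n powr (1 - 1 / real (Suc k)) * fact k < (real m + real (Suc k)) ^ k"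
proof -
  define d where "d = Suc k"
  define X where "X = real n powr (1 / real d)"
  have "d > 0" unfolding d_def by simp
  then have "X ^ d = real n powr (1 / real d * real d)"
    unfolding X_def by (cases "n = 0") (simp_all add: powr_realpow[symmetric] powr_powr)
  then have "X ^ d = real n" unfolding d_def by simp
  then have "X ^ d * fact d < (real n + 1) * fact d" by simp
  moreover have "(real n + 1) * fact d \<le> 2 * (real m + real d) ^ d"
    using simplex_level_upper_bound(1)[of d n m] k upper unfolding d_def by simp
  ultimately have "X ^ Suc k * fact (Suc k) < 2 * (real m + real (Suc k)) ^ Suc k"
    unfolding d_def by linarith
  from power_mult_fact_less[OF k _ _ this]
  have "X ^ k * fact k < (real m + real (Suc k)) ^ k" by (simp add: X_def)
  moreover have "X ^ k = real n powr (1 / real d * real k)"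
    unfolding X_def using k by (cases "n = 0") (simp_all add: powr_realpow[symmetric] powr_powr)
  moreover have "1 / real d * real k = 1 - 1 / real d" unfolding d_def by (simp add: field_simps)
  ultimately show ?thesis unfolding d_def by simp
qed

text \<open>In the hypothesis on \<open>m\<close>, \<open>(m + d)\<^sup>k / k!\<close> and \<open>d ln (m + d)\<close> are upper bounds
  for \<open>n powr (1 - 1/d)\<close> and \<open>ln (n + 1)\<close>, and \<open>m\<^sup>k / k!\<close> is a lower bound for the
  size of the \<open>k\<close>-dimensional simplex.\<close>

lemma ln_p_gt_of_simplex_level:
  fixes k m n :: nat
  assumes k: "k \<ge> 1" and m: "m \<ge> 1"
    and lower: "2 * card (simplex_pts (Suc k) m) \<le> n"
    and upper: "n < 2 * card (simplex_pts (Suc k) (m + 1))"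
    and key: "fact k * real (Suc k) * ln (real m + real (Suc k))
      \<le> real m ^ k * ln 3 - (real m + real (Suc k)) ^ k"
  shows "real n powr (1 - 1 / real (Suc k)) < ln (real (p (Suc k) n))"
proof -
  define d where "d = Suc k"
  define M where "M = real m + real d"
  define C where "C = card (simplex_pts k m)"
  have "m \<le> n" using lower card_simplex_pts_ge[of "Suc k" m] by simp
  then have n: "real n > 0" using m by simp
  have fam: "3 ^ C \<le> (n + 1) * p d n"
    unfolding C_def d_def by (rule three_pow_card_simplex_pts_le[OF lower])
  have "0 < (3::nat) ^ C" by simp
  then have ppos: "p d n > 0" using fam by (cases "p d n") auto
  have "real C * ln 3 \<le> ln (real n + 1) + ln (real (p d n))"
  proof -
    have "real (3 ^ C) \<le> real ((n + 1) * p d n)" using fam by (simp only: of_nat_le_iff)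
    then have "3 ^ C \<le> (real n + 1) * real (p d n)" by (simp add: algebra_simps)
    then have "ln (3 ^ C) \<le> ln ((real n + 1) * real (p d n))" using ppos by simp
    then show ?thesis using ppos n by (simp add: ln_realpow ln_mult)
  qed
  moreover have "ln (real n + 1) \<le> real d * ln M"
    using simplex_level_upper_bound(2)[of d n m] upper k n
    unfolding M_def d_def by (simp add: ln_realpow[symmetric] del: of_nat_Suc)
  ultimately have "fact k * (real C * ln 3) \<le> fact k * (real d * ln M) + fact k * ln (real (p d n))"
    by (simp add: distrib_left[symmetric])
  moreover have "real m ^ k * ln 3 \<le> fact k * (real C * ln 3)"
    using card_simplex_pts[OF m] binomial_mult_fact_ge[OF m] mult_right_mono[of _ _ "ln 3"]
    unfolding C_def by (simp add: mult.assoc mult.commute)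
  moreover have "fact k * (real d * ln M) \<le> real m ^ k * ln 3 - M ^ k"
    using key unfolding M_def d_def by (simp add: mult.assoc)
  ultimately have "M ^ k \<le> fact k * ln (real (p d n))" by linarith
  from order_less_le_trans[OF powr_mult_fact_less_of_simplex_level[OF k upper] this[unfolded M_def d_def]]
  have "real n powr (1 - 1 / real (Suc k)) * fact k < ln (real (p (Suc k) n)) * fact k"
    unfolding d_def by (simp only: mult.commute)
  then show ?thesis by simp
qed

lemma exists_simplex_level:
  assumes j: "j \<ge> 1" and n: "n \<ge> 2"
  obtains m where "m \<ge> 1" "2 * card (simplex_pts j m) \<le> n" "n < 2 * card (simplex_pts j (m + 1))"
proof -
  define A where "A = {m. 1 \<le> m \<and> 2 * card (simplex_pts j m) \<le> n}"
  have "1 \<in> A" unfolding A_def using card_simplex_pts[of 1 j] n by simp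
  have "A \<subseteq> {..n}"
  proof
    fix m assume "m \<in> A"
    then show "m \<in> {..n}" using card_simplex_pts_ge[OF j, of m] unfolding A_def by simp
  qed
  then have "finite A" by (rule finite_subset) simp
  define m where "m = Max A"
  have "m \<in> A" unfolding m_def using \<open>finite A\<close> \<open>1 \<in> A\<close> by (intro Max_in) auto
  moreover have "m + 1 \<notin> A" using Max_ge[OF \<open>finite A\<close>, of "m + 1"] unfolding m_def[symmetric] by auto
  ultimately show ?thesis using that unfolding A_def by auto
qed

lemma le_powr_threshold:
  assumes d: "d \<ge> 2"
  shows "real d \<le> real d powr (12 * real d * ln (real d))"
proof -
  have "ln 2 \<le> ln (real d)" using d by simp
  then have "2 / 3 \<le> ln (real d)" using ln2_ge_two_thirds by linarith
  then have "2 * (2 / 3) \<le> real d * ln (real d)" using d by (intro mult_mono) auto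
  then have "real d powr 1 \<le> real d powr (12 * real d * ln (real d))"
    using d by (intro powr_mono) auto
  then show ?thesis using d by simp
qed

lemma ln_p_gt:
  fixes d n :: nat
  assumes d: "d \<ge> 2" and n: "real n \<ge> real d powr (12 * real d * ln (real d))"
  shows "real n powr (1 - 1 / real d) < ln (real (p d n))"
proof -
  obtain k where dk: "d = Suc k" and k: "k \<ge> 1" using d by (cases d) auto
  have "d \<le> n" using le_powr_threshold[OF d] n by simp
  then obtain m where m: "m \<ge> 1" and lower: "2 * card (simplex_pts d m) \<le> n"
    and upper: "n < 2 * card (simplex_pts d (m + 1))"
    using exists_simplex_level[of d n] d by auto
  have "real n < (real m + real d) ^ d"
    using simplex_level_upper_bound(2)[OF d upper] by simp
  then have "real n powr (1 / real d) < ((real m + real d) ^ d) powr (1 / real d)"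
    using d by (intro powr_less_mono2) auto
  also have "\<dots> = real m + real d"
    using d by (simp add: powr_realpow[symmetric] powr_powr)
  finally have "real n powr (1 / real d) < real m + real d" .
  moreover have "real d powr (12 * ln (real d)) \<le> real n powr (1 / real d)"
    using powr_mono2[OF _ _ n, of "1 / real d"] d by (simp add: powr_powr)
  ultimately have "real d powr (12 * ln (real d)) < real m + real d" by linarith
  then show ?thesis
    using key_inequality[OF k] ln_p_gt_of_simplex_level[OF k m] lower upper dk by simp
qed

lemma plus_pi_squared_div_6_less: "k \<ge> 1 \<Longrightarrow> real k + pi ^ 2 / 6 < (real k + 1) ^ 2"
proof -
  assume k: "k \<ge> 1"
  have "pi ^ 2 < 16" using power_strict_mono[of pi 4 2] pi_less_4 pi_gt_zero by simp
  moreover have "real k * 1 \<le> real k * real k" using k by (intro mult_left_mono) auto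
  moreover have "(real k + 1) ^ 2 = real k * real k + 2 * real k + 1"
    by (simp add: power2_eq_square algebra_simps)
  ultimately show ?thesis using k by linarith
qed

theorem proposition1:
  fixes d n :: nat
  assumes "d \<ge> 2"
    and "real n \<ge> real d powr (12 * real d * ln (real d))"
  shows "1 < ln (real (p d n)) / real n powr (1 - 1 / real d)
       \<and> ln (real (p d n)) / real n powr (1 - 1 / real d) < real d ^ 2"
proof -
  obtain k where d: "d = Suc k" and k: "k \<ge> 1" using assms(1) by (cases d) auto
  have n: "n \<ge> 1" using le_powr_threshold[OF assms(1)] assms by simp
  have pos: "real n powr (1 - 1 / real d) > 0" using n by simp
  have "real n powr (1 - 1 / real d) < ln (real (p d n))"
    using ln_p_gt[OF assms] .
  moreover have "ln (real (p d n)) \<le> (real k + pi ^ 2 / 6) * real n powr (1 - 1 / real d)"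
    using ln_p_le[OF k n] d by simp
  moreover have "(real k + pi ^ 2 / 6) * real n powr (1 - 1 / real d)
      < real d ^ 2 * real n powr (1 - 1 / real d)"
    using plus_pi_squared_div_6_less[OF k] pos d by (intro mult_strict_right_mono) (auto simp: add.commute)
  ultimately have "real n powr (1 - 1 / real d) < ln (real (p d n))"
    and "ln (real (p d n)) < real d ^ 2 * real n powr (1 - 1 / real d)" by linarith+
  then show ?thesis using pos by (simp add: less_divide_eq divide_less_eq)
qed

end
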